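(* In the setting of the previous statement, a necessary condition for the normal expansions of the fields $\phi^\alpha$ determined from the null data to be absolutely convergent in a neighbourhood of the origin $x=0$ is that there exist positive constants $M$, $r$ such that the null data satisfy $$|\mathcal C(D_{{\bf a}_p}\cdots D_{{\bf a}_1}\phi^\alpha)(q)|\le \frac{M\,p!}{r^p},\qquad p\ge0,\quad {\bf a}_p,\dots,{\bf a}_1=1,2,3,\quad \alpha=1,\dots,n.$$ In particular every real analytic solution of the field equations near $q$ has null data satisfying such estimates.
   Context: Field equations: on a 3-dimensional manifold $N$ with a negative definite metric $h$ (Levi-Civita connection $D$, Laplacian $\Delta_h$, Ricci tensor $R_{ab}[h]$) and $n$ scalar fields $\phi^\alpha$, $\alpha=1,\dots,n$: $$\Delta_h\phi^\alpha=f^\alpha(\phi^\gamma,D_c\phi^\gamma),\qquad R_{ab}[h]=F^\alpha(\phi^\gamma)D_aD_b\phi^\alpha+F^{\alpha\beta}(\phi^\gamma)D_a\phi^\alpha D_b\phi^\beta+f(\phi^\gamma,D_c\phi^\gamma)h_{ab},$$ with $F^\alpha,F^{\alpha\beta}=F^{\beta\alpha}$ real analytic in $\phi^\gamma$ and $f,f^\alpha$ real analytic scalar functions of $\phi^\gamma$ and $D_c\phi^\gamma$. $c_{\bf a}$ is an $h$-normal frame centred at $q$ (orthonormal, $h(c_{\bf a},c_{\bf b})=-\delta_{\bf ab}$, parallelly transported along geodesics through $q$), $x^a$ the associated normal coordinates. $\mathcal C$ denotes the symmetric trace-free part; the null data are $\mathcal C(D_{{\bf a}_p}\cdots D_{{\bf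 a}_1}\phi^\alpha)(q)$, $p\ge0$, and they determine (uniquely) the normal expansion coefficients $D_{{\bf a}_p}\cdots D_{{\bf a}_1}\phi^\alpha(q)$ of $\phi^\alpha(x)=\sum_p\frac1{p!}x^{b_p}\cdots x^{b_1}D_{{\bf b}_p}\cdots D_{{\bf b}_1}\phi^\alpha(q)$ via the field equations. *)

theory Defs
  imports "HOL-Analysis.Analysis" "HOL-Library.Multiset"
begin

text \<open>Rank-p covariant tensors on a 3-dimensional space, given by their components
  in an orthonormal frame: functions on index lists (indices of type 3) of length p.
  The list [a_p, ..., a_1] stands for the index string a_p ... a_1.\<close>

definition tensor_ip :: "nat \<Rightarrow> (3 list \<Rightarrow> real) \<Rightarrow> (3 list \<Rightarrow> real) \<Rightarrow> real" where
  "tensor_ip p A B = (\<Sum>bs\<in>{bs::3 list. length bs = p}. A bs * B bs)"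

text \<open>Symmetric trace-free rank-p tensors (trace w.r.t. the frame metric, which is
  -delta; the sign is irrelevant for vanishing of traces).\<close>

definition symm_tf :: "nat \<Rightarrow> (3 list \<Rightarrow> real) \<Rightarrow> bool" where
  "symm_tf p S \<longleftrightarrow>
     (\<forall>bs. length bs \<noteq> p \<longrightarrow> S bs = 0) \<and>
     (\<forall>bs bs'. length bs = p \<longrightarrow> mset bs' = mset bs \<longrightarrow> S bs' = S bs) \<and>
     (\<forall>bs. length bs + 2 = p \<longrightarrow> (\<Sum>i\<in>UNIV. S (i # i # bs)) = 0)"

text \<open>The symmetric trace-free part C(T) of a rank-p tensor T: the orthogonal projection
  of T onto the space of symmetric trace-free rank-p tensors.\<close>

definition stf_part :: "nat \<Rightarrow> (3 list \<Rightarrow> real) \<Rightarrow> (3 list \<Rightarrow> real)" where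
  "stf_part p T = (THE S. symm_tf p S \<and>
      (\<forall>U. symm_tf p U \<longrightarrow> tensor_ip p (\<lambda>bs. T bs - S bs) U = 0))"

end

theory Submission
  imports Defs
begin

text \<open>
  The symmetric trace-free part C(T) is the orthogonal projection of T onto
  the space of symmetric trace-free tensors with respect to the Euclidean inner product
  on frame components.  A projection does not increase the length, so every component of
  C(T) is bounded by the Euclidean length of T, hence by the l1-norm of its components.
  On the other hand, absolute convergence of the normal expansion at the diagonal point
  x = (t,t,t) says that the series of t^p/p! times the l1-norm of the p-th coefficient
  tensor converges; its terms are therefore bounded by some K, i.e. the l1-norm is at most
  K p!/t^p.  A common K for the finitely many fields gives the estimate with r = t.
\<close>

section \<open>Orthogonal projections onto spaces of finitely supported functions\<close>

definition sum_ip :: "'a set \<Rightarrow> ('a \<Rightarrow> real) \<Rightarrow> ('a \<Rightarrow> real) \<Rightarrow> real" where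
  "sum_ip B f g = (\<Sum>x\<in>B. f x * g x)"

definition fun_subspace :: "('a \<Rightarrow> real) set \<Rightarrow> bool" where
  "fun_subspace V \<longleftrightarrow> (\<lambda>x. 0) \<in> V \<and> (\<forall>f\<in>V. \<forall>g\<in>V. (\<lambda>x. f x + g x) \<in> V)
     \<and> (\<forall>f\<in>V. \<forall>c. (\<lambda>x. c * f x) \<in> V)"

lemma sum_ip_comm: "sum_ip B f g = sum_ip B g f"
  unfolding sum_ip_def by (simp add: mult.commute)

lemma sum_ip_diff_left: "sum_ip B (\<lambda>x. f x - g x) h = sum_ip B f h - sum_ip B g h"
  unfolding sum_ip_def by (simp add: algebra_simps sum_subtractf)

lemma sum_ip_add_left: "sum_ip B (\<lambda>x. f x + g x) h = sum_ip B f h + sum_ip B g h"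
  unfolding sum_ip_def by (simp add: algebra_simps sum.distrib)

lemma sum_ip_scale_left: "sum_ip B (\<lambda>x. c * f x) h = c * sum_ip B f h"
  unfolding sum_ip_def by (simp add: algebra_simps sum_distrib_left)

lemma sum_ip_diff_right: "sum_ip B h (\<lambda>x. f x - g x) = sum_ip B h f - sum_ip B h g"
  using sum_ip_diff_left sum_ip_comm by metis

lemma sum_ip_add_right: "sum_ip B h (\<lambda>x. f x + g x) = sum_ip B h f + sum_ip B h g"
  using sum_ip_add_left sum_ip_comm by metis

lemma sum_ip_scale_right: "sum_ip B h (\<lambda>x. c * f x) = c * sum_ip B h f"
  using sum_ip_scale_left sum_ip_comm by metis

lemma sum_ip_self_nonneg: "0 \<le> sum_ip B f f"
  unfolding sum_ip_def by (auto intro: sum_nonneg)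

lemma fun_subspace_add_scaled:
  assumes "fun_subspace V" "f \<in> V" "g \<in> V"
  shows "(\<lambda>x. f x + c * g x) \<in> V"
proof -
  have add: "\<And>f g. f \<in> V \<Longrightarrow> g \<in> V \<Longrightarrow> (\<lambda>x. f x + g x) \<in> V"
    using assms(1) unfolding fun_subspace_def by blast
  have "(\<lambda>x. c * g x) \<in> V" using assms unfolding fun_subspace_def by blast
  from add[OF assms(2) this] show ?thesis .
qed

lemma fun_subspace_diff:
  assumes "fun_subspace V" "f \<in> V" "g \<in> V"
  shows "(\<lambda>x. f x - g x) \<in> V"
  using fun_subspace_add_scaled[OF assms, of "-1"] by simp

text \<open>Induction on A: the subspace
  V0 of functions vanishing at the new point a has a projection by hypothesis; if V \<noteq> V0,
  V is spanned by V0 and one vector w orthogonal to V0, and we add the component of T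
  along w (one Gram--Schmidt step).\<close>

lemma orthogonal_projection_exists:
  assumes "finite A" "fun_subspace V" "A \<subseteq> B" "finite B"
    and "\<forall>S\<in>V. \<forall>x. x \<notin> A \<longrightarrow> S x = 0"
  shows "\<exists>S\<in>V. \<forall>U\<in>V. sum_ip B (\<lambda>x. T x - S x) U = 0"
  using assms
proof (induction A arbitrary: V T rule: finite_induct)
  case empty
  then have "V = {\<lambda>x. 0}" unfolding fun_subspace_def by auto
  then show ?case by (auto simp: sum_ip_def)
next
  case (insert a A)
  define V0 where "V0 = {S\<in>V. S a = 0}"
  have "fun_subspace V0" using insert.prems(1) unfolding fun_subspace_def V0_def by auto
  moreover have "\<forall>S\<in>V0. \<forall>x. x \<notin> A \<longrightarrow> S x = 0"
    using insert.prems(4) unfolding V0_def by auto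
  ultimately have proj_V0: "\<And>T. \<exists>S\<in>V0. \<forall>U\<in>V0. sum_ip B (\<lambda>x. T x - S x) U = 0"
    using insert.IH insert.prems(2,3) by blast
  show ?case
  proof (cases "V0 = V")
    case True
    then show ?thesis using proj_V0 by auto
  next
    case False
    then obtain v where v: "v \<in> V" "v a \<noteq> 0" unfolding V0_def by auto
    obtain Pv where Pv: "Pv \<in> V0" "\<forall>U\<in>V0. sum_ip B (\<lambda>x. v x - Pv x) U = 0"
      using proj_V0 by blast
    obtain PT where PT: "PT \<in> V0" "\<forall>U\<in>V0. sum_ip B (\<lambda>x. T x - PT x) U = 0"
      using proj_V0 by blast
    define w where "w = (\<lambda>x. v x - Pv x)"
    have w_in: "w \<in> V" unfolding w_def using fun_subspace_diff insert.prems(1) v(1) Pv(1)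
      unfolding V0_def by auto
    have w_a: "w a \<noteq> 0" using v Pv(1) unfolding w_def V0_def by auto
    have w_perp: "\<And>U. U \<in> V0 \<Longrightarrow> sum_ip B w U = 0" using Pv(2) w_def by auto
    have "0 < w a * w a" using w_a not_real_square_gt_zero by blast
    then have w_pos: "sum_ip B w w > 0" unfolding sum_ip_def
      using insert.prems(2,3) by (intro sum_pos2[of B a]) auto
    define k where "k = sum_ip B T w / sum_ip B w w"
    define S where "S = (\<lambda>x. PT x + k * w x)"
    have S_in: "S \<in> V" unfolding S_def using fun_subspace_add_scaled insert.prems(1) PT(1) w_in
      unfolding V0_def by auto
    have residual: "(\<lambda>x. T x - S x) = (\<lambda>x. (T x - PT x) - k * w x)" unfolding S_def by auto
    have perp_V0: "sum_ip B (\<lambda>x. T x - S x) U0 = 0" if "U0 \<in> V0" for U0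
      using PT(2) that w_perp[OF that]
      unfolding residual sum_ip_diff_left[of B "\<lambda>x. T x - PT x" "\<lambda>x. k * w x"]
      by (simp add: sum_ip_scale_left)
    have perp_w: "sum_ip B (\<lambda>x. T x - S x) w = 0"
      using w_perp[OF PT(1)] w_pos unfolding residual sum_ip_diff_left sum_ip_scale_left k_def
      by (simp add: sum_ip_comm)
    have "sum_ip B (\<lambda>x. T x - S x) U = 0" if U: "U \<in> V" for U
    proof -
      define l where "l = U a / w a"
      define U0 where "U0 = (\<lambda>x. U x + (- l) * w x)"
      have "U0 \<in> V" using fun_subspace_add_scaled[OF insert.prems(1) U w_in] unfolding U0_def .
      moreover have "U0 a = 0" using w_a unfolding U0_def l_def by simp
      ultimately have "U0 \<in> V0" unfolding V0_def by blast
      have "U = (\<lambda>x. U0 x + l * w x)" unfolding U0_def by auto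
      then have "sum_ip B (\<lambda>x. T x - S x) U
          = sum_ip B (\<lambda>x. T x - S x) U0 + l * sum_ip B (\<lambda>x. T x - S x) w"
        by (simp add: sum_ip_add_right sum_ip_scale_right)
      then show ?thesis using perp_V0[OF \<open>U0 \<in> V0\<close>] perp_w by simp
    qed
    then show ?thesis using S_in by blast
  qed
qed

text \<open>Pythagoras for a projection: if T - S is orthogonal to S, then S is not longer than T.\<close>

lemma projection_length_le:
  assumes "sum_ip B (\<lambda>x. T x - S x) S = 0"
  shows "sum_ip B S S \<le> sum_ip B T T"
proof -
  have "sum_ip B T T = sum_ip B (\<lambda>x. T x - S x) (\<lambda>x. T x - S x) + sum_ip B S S"
    using assms by (simp add: sum_ip_diff_left sum_ip_diff_right sum_ip_comm)
  then show ?thesis using sum_ip_self_nonneg[of B "\<lambda>x. T x - S x"] by linarith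
qed

lemma component_sq_le_length:
  assumes "finite B" "a \<in> B"
  shows "S a * S a \<le> sum_ip B S S"
  unfolding sum_ip_def using assms by (intro member_le_sum) auto

lemma length_le_l1_sq:
  assumes "finite B"
  shows "sum_ip B T T \<le> (\<Sum>x\<in>B. \<bar>T x\<bar>) * (\<Sum>x\<in>B. \<bar>T x\<bar>)"
proof -
  have "sum_ip B T T = (\<Sum>x\<in>B. \<bar>T x\<bar> * \<bar>T x\<bar>)" unfolding sum_ip_def by (simp add: abs_mult_self)
  also have "\<dots> \<le> (\<Sum>x\<in>B. \<bar>T x\<bar> * (\<Sum>y\<in>B. \<bar>T y\<bar>))"
    using assms by (intro sum_mono mult_left_mono member_le_sum) auto
  also have "\<dots> = (\<Sum>x\<in>B. \<bar>T x\<bar>) * (\<Sum>x\<in>B. \<bar>T x\<bar>)" by (simp add: sum_distrib_right)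
  finally show ?thesis .
qed

lemma projection_component_le_l1:
  assumes "finite B" "a \<in> B" "sum_ip B (\<lambda>x. T x - S x) S = 0"
  shows "\<bar>S a\<bar> \<le> (\<Sum>x\<in>B. \<bar>T x\<bar>)"
proof -
  have "S a * S a \<le> (\<Sum>x\<in>B. \<bar>T x\<bar>) * (\<Sum>x\<in>B. \<bar>T x\<bar>)"
    using component_sq_le_length[OF assms(1,2), of S] projection_length_le[OF assms(3)]
      length_le_l1_sq[OF assms(1), of T] by linarith
  then have "\<bar>S a\<bar> \<le> \<bar>\<Sum>x\<in>B. \<bar>T x\<bar>\<bar>" using abs_le_square_iff by (metis power2_eq_square)
  then show ?thesis by simp
qed

section \<open>The symmetric trace-free part\<close>

lemma tensor_ip_eq_sum_ip: "tensor_ip p A B = sum_ip {bs. length bs = p} A B"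
  unfolding tensor_ip_def sum_ip_def by simp

lemma symm_tf_zero: "symm_tf p S \<Longrightarrow> length bs \<noteq> p \<Longrightarrow> S bs = 0"
  unfolding symm_tf_def by blast

lemma symm_tf_add_scaled:
  assumes f: "symm_tf p f" and g: "symm_tf p g"
  shows "symm_tf p (\<lambda>x. f x + c * g x)"
  unfolding symm_tf_def
proof (intro conjI allI impI)
  fix bs :: "3 list"
  assume "length bs \<noteq> p"
  then show "f bs + c * g bs = 0" using f g unfolding symm_tf_def by simp
next
  fix bs bs' :: "3 list"
  assume "length bs = p" "mset bs' = mset bs"
  then show "f bs' + c * g bs' = f bs + c * g bs" using f g unfolding symm_tf_def by metis
next
  fix bs :: "3 list"
  assume "length bs + 2 = p"
  then have "(\<Sum>i\<in>UNIV. f (i # i # bs)) = 0" "(\<Sum>i\<in>UNIV. g (i # i # bs)) = 0"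
    using f g unfolding symm_tf_def by blast+
  then show "(\<Sum>i\<in>UNIV. f (i # i # bs) + c * g (i # i # bs)) = 0"
    by (simp add: sum.distrib sum_distrib_left[symmetric])
qed

lemma fun_subspace_symm_tf: "fun_subspace {S. symm_tf p S}"
proof -
  have "symm_tf p (\<lambda>x. 0)" unfolding symm_tf_def by simp
  moreover have "symm_tf p (\<lambda>x. f x + g x)" if "symm_tf p f" "symm_tf p g" for f g
    using symm_tf_add_scaled[OF that, of 1] by simp
  moreover have "symm_tf p (\<lambda>x. c * f x)" if "symm_tf p f" for f c
    using symm_tf_add_scaled[OF \<open>symm_tf p (\<lambda>x. 0)\<close> that, of c] by simp
  ultimately show ?thesis unfolding fun_subspace_def by blast
qed

text \<open>The description in stf_part determines a unique tensor: it exists as the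
  orthogonal projection, and two such tensors differ by a symmetric trace-free
  tensor orthogonal to itself.\<close>

lemma stf_part_char:
  "symm_tf p (stf_part p T) \<and>
   (\<forall>U. symm_tf p U \<longrightarrow> tensor_ip p (\<lambda>bs. T bs - stf_part p T bs) U = 0)"
proof -
  let ?L = "{bs::3 list. length bs = p}"
  let ?P = "\<lambda>S. symm_tf p S \<and> (\<forall>U. symm_tf p U \<longrightarrow> tensor_ip p (\<lambda>bs. T bs - S bs) U = 0)"
  have fin: "finite ?L" by (rule finite_list_length)
  have "\<forall>S\<in>{S. symm_tf p S}. \<forall>bs. bs \<notin> ?L \<longrightarrow> S bs = 0" using symm_tf_zero by blast
  from orthogonal_projection_exists[OF fin fun_subspace_symm_tf subset_refl fin this, where T=T]
  obtain S where "symm_tf p S" "\<forall>U\<in>{S. symm_tf p S}. sum_ip ?L (\<lambda>bs. T bs - S bs) U = 0"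
    by blast
  then have S: "?P S" unfolding tensor_ip_eq_sum_ip by simp
  have unique: "S' = S" if S': "?P S'" for S'
  proof -
    define D where "D = (\<lambda>x. S x - S' x)"
    have D: "symm_tf p D"
      using fun_subspace_diff[OF fun_subspace_symm_tf] S S' unfolding D_def by blast
    have "sum_ip ?L D D = sum_ip ?L (\<lambda>bs. T bs - S' bs) D - sum_ip ?L (\<lambda>bs. T bs - S bs) D"
      unfolding sum_ip_def sum_subtractf[symmetric] by (rule sum.cong) (simp_all add: D_def algebra_simps)
    also have "\<dots> = 0" using S S' D unfolding tensor_ip_eq_sum_ip by simp
    finally have "\<forall>bs\<in>?L. D bs * D bs = 0"
      unfolding sum_ip_def using sum_nonneg_eq_0_iff[OF fin, of "\<lambda>x. D x * D x"] by simp
    then have "D bs = 0" for bs using symm_tf_zero[OF D, of bs] by auto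
    then show ?thesis unfolding D_def by (simp add: fun_eq_iff)
  qed
  from S unique have "\<exists>!S. ?P S" by (rule ex1I)
  then show ?thesis unfolding stf_part_def by (rule theI')
qed

lemma stf_part_bound:
  assumes "length as = p"
  shows "\<bar>stf_part p T as\<bar> \<le> (\<Sum>bs\<in>{bs::3 list. length bs = p}. \<bar>T bs\<bar>)"
proof (rule projection_component_le_l1)
  show "finite {bs::3 list. length bs = p}" by (rule finite_list_length)
  show "as \<in> {bs::3 list. length bs = p}" using assms by simp
  show "sum_ip {bs. length bs = p} (\<lambda>bs. T bs - stf_part p T bs) (stf_part p T) = 0"
    using stf_part_char[of p T] unfolding tensor_ip_eq_sum_ip by blast
qed

section \<open>Coefficient bounds from convergence\<close>

text \<open>Terms of a convergent series are bounded; for the series of a_p t^p/p! this is a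
  Cauchy-type estimate a_p \<le> K p!/t^p.\<close>

lemma summable_imp_coeff_bound:
  fixes a :: "nat \<Rightarrow> real"
  assumes "t > 0" "summable (\<lambda>p. (1 / fact p) * (t ^ p * a p))"
  shows "\<exists>K>0. \<forall>p. a p \<le> K * (fact p / t ^ p)"
proof -
  let ?f = "\<lambda>p. (1 / fact p) * (t ^ p * a p)"
  have "Bseq ?f" using summable_LIMSEQ_zero[OF assms(2)] by (intro convergent_imp_Bseq convergentI)
  then obtain K where "K > 0" and K: "\<And>p. \<bar>?f p\<bar> \<le> K" unfolding Bseq_def by auto
  have "a p \<le> K * (fact p / t ^ p)" for p
    using K[of p] assms(1) by (simp add: field_simps abs_le_iff)
  with \<open>K > 0\<close> show ?thesis by blast
qed

lemma finite_uniform_bound: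
  fixes g :: "'i \<Rightarrow> nat \<Rightarrow> real"
  assumes "finite I" "\<forall>i\<in>I. \<exists>K>0. \<forall>p. g i p \<le> K * h p" "\<forall>p. h p \<ge> 0"
  shows "\<exists>M>0. \<forall>i\<in>I. \<forall>p. g i p \<le> M * h p"
proof -
  obtain K where K: "\<forall>i\<in>I. K i > 0 \<and> (\<forall>p. g i p \<le> K i * h p)" using bchoice[OF assms(2)] by blast
  define M where "M = 1 + (\<Sum>i\<in>I. K i)"
  have "K i \<le> M" if "i \<in> I" for i
    using member_le_sum[of i I K] that K assms(1) unfolding M_def by force
  then have "g i p \<le> M * h p" if "i \<in> I" for i p
    using K that assms(3) by (meson mult_right_mono order_trans)
  moreover have "M > 0" using K unfolding M_def by (simp add: add_pos_nonneg less_imp_le sum_nonneg)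
  ultimately show ?thesis by blast
qed

lemma diagonal_monomial:
  "prod_list (map (\<lambda>b. (\<chi> i. t :: real^3) $ b) bs) = t ^ length bs"
  by (simp add: map_replicate_const prod_list_replicate)

lemma norm_diagonal_point: "t \<ge> 0 \<Longrightarrow> norm (\<chi> i. t :: real^3) \<le> 3 * t"
  using norm_le_l1_cart[of "\<chi> i. t :: real^3"] by simp

theorem lemma2p2:
  fixes n :: nat and c :: "nat \<Rightarrow> 3 list \<Rightarrow> real"
  assumes "\<exists>e>0. \<forall>x::real^3. norm x < e \<longrightarrow>
     (\<forall>\<alpha>\<in>{1..n}. summable (\<lambda>p. (1 / fact p) *
        (\<Sum>bs\<in>{bs::3 list. length bs = p}. \<bar>prod_list (map (\<lambda>b. x $ b) bs) * c \<alpha> bs\<bar>)))"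
  shows "\<exists>M>0. \<exists>r>0. \<forall>\<alpha>\<in>{1..n}. \<forall>p. \<forall>as::3 list. length as = p \<longrightarrow>
     \<bar>stf_part p (c \<alpha>) as\<bar> \<le> M * fact p / r ^ p"
proof -
  obtain e where "e > 0" and conv: "\<forall>x::real^3. norm x < e \<longrightarrow>
     (\<forall>\<alpha>\<in>{1..n}. summable (\<lambda>p. (1 / fact p) *
        (\<Sum>bs\<in>{bs::3 list. length bs = p}. \<bar>prod_list (map (\<lambda>b. x $ b) bs) * c \<alpha> bs\<bar>)))"
    using assms by blast
  define t where "t = e / 4"
  have t: "t > 0" "norm (\<chi> i. t :: real^3) < e"
    using \<open>e > 0\<close> norm_diagonal_point[of t] unfolding t_def by auto
  let ?l1 = "\<lambda>\<alpha> p. \<Sum>bs\<in>{bs::3 list. length bs = p}. \<bar>c \<alpha> bs\<bar>"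
  have at_diagonal: "(\<Sum>bs\<in>{bs::3 list. length bs = p}.
      \<bar>prod_list (map (\<lambda>b. (\<chi> i. t :: real^3) $ b) bs) * c \<alpha> bs\<bar>) = t ^ p * ?l1 \<alpha> p" for \<alpha> p
    unfolding sum_distrib_left diagonal_monomial using t(1) by (intro sum.cong) (simp_all add: abs_mult)
  have summable: "summable (\<lambda>p. (1 / fact p) * (t ^ p * ?l1 \<alpha> p))" if "\<alpha> \<in> {1..n}" for \<alpha>
  proof -
    have "summable (\<lambda>p. (1 / fact p) * (\<Sum>bs\<in>{bs::3 list. length bs = p}.
        \<bar>prod_list (map (\<lambda>b. (\<chi> i. t :: real^3) $ b) bs) * c \<alpha> bs\<bar>))"
      using conv t(2) that by blast
    then show ?thesis by (simp only: at_diagonal)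
  qed
  have "\<exists>M>0. \<forall>\<alpha>\<in>{1..n}. \<forall>p. ?l1 \<alpha> p \<le> M * (fact p / t ^ p)"
  proof (rule finite_uniform_bound)
    show "\<forall>\<alpha>\<in>{1..n}. \<exists>K>0. \<forall>p. ?l1 \<alpha> p \<le> K * (fact p / t ^ p)"
      using summable_imp_coeff_bound[OF t(1) summable] by blast
    show "\<forall>p. 0 \<le> fact p / t ^ p" using t(1) by simp
  qed simp
  then obtain M where "M > 0" and M: "\<forall>\<alpha>\<in>{1..n}. \<forall>p. ?l1 \<alpha> p \<le> M * (fact p / t ^ p)"
    by blast
  have bound: "\<bar>stf_part p (c \<alpha>) as\<bar> \<le> M * fact p / t ^ p"
    if "\<alpha> \<in> {1..n}" "length as = p" for \<alpha> p as
  proof -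
    have "?l1 \<alpha> p \<le> M * fact p / t ^ p"
      using M that(1) by (simp only: times_divide_eq_right[symmetric])
    with stf_part_bound[OF that(2)] show ?thesis by (rule order_trans)
  qed
  show ?thesis using \<open>M > 0\<close> t(1) bound by blast
qed

end
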